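(* Let $\mathbf P=(P,\leq,{}',0,1)$ be an orthogonal lub-complete poset. Then the following conditions are equivalent: (i) $\mathbf P$ is an orthomodular poset. (ii) $\mathbf P$ satisfies $x\leq y$ if and only if $x\rightarrow_S y=1$ for all $x,y\in P$. (iii) $\mathbf P$ satisfies $x\leq y$ if and only if $x\rightarrow_D y=1$ for all $x,y\in P$.
   Context: $(P,\leq,{}',0,1)$ is a bounded poset with an antitone involution ${}'$; orthogonal means $x\leq y'$ implies $x\vee y$ exists; lub-complete means for every lower bound $x$ of a finite subset $M$ there is a maximal lower bound of $M$ above $x$; orthomodular means orthogonal and $x\leq y$ implies $x\vee(y\wedge x')=y$. $L(x,y)$ is the set of common lower bounds and $\mathrm{Max}\,A$ the set of maximal elements of $A$; joins with sets are elementwise. Sasaki implication: $x\rightarrow_S y:=x'\vee \mathrm{Max}\,L(x,y)$; Dishkant implication: $x\rightarrow_D y:=y'\rightarrow_S x'=y\vee \mathrm{Max}\,L(x',y')$. "$=1$" means equal to $\{1\}$. *)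

theory Defs
  imports Main
begin

definition bounded_poset_inv ::
  "'a set \<Rightarrow> ('a \<Rightarrow> 'a \<Rightarrow> bool) \<Rightarrow> ('a \<Rightarrow> 'a) \<Rightarrow> 'a \<Rightarrow> 'a \<Rightarrow> bool" where
  "bounded_poset_inv P le c zero one \<longleftrightarrow>
     (\<forall>x\<in>P. le x x) \<and>
     (\<forall>x\<in>P. \<forall>y\<in>P. le x y \<and> le y x \<longrightarrow> x = y) \<and>
     (\<forall>x\<in>P. \<forall>y\<in>P. \<forall>w\<in>P. le x y \<and> le y w \<longrightarrow> le x w) \<and>
     zero \<in> P \<and> one \<in> P \<and> (\<forall>x\<in>P. le zero x \<and> le x one) \<and>
     (\<forall>x\<in>P. c x \<in> P) \<and> (\<forall>x\<in>P. c (c x) = x) \<and>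
     (\<forall>x\<in>P. \<forall>y\<in>P. le x y \<longrightarrow> le (c y) (c x))"

definition is_join :: "'a set \<Rightarrow> ('a \<Rightarrow> 'a \<Rightarrow> bool) \<Rightarrow> 'a \<Rightarrow> 'a \<Rightarrow> 'a \<Rightarrow> bool" where
  "is_join P le x y j \<longleftrightarrow> j \<in> P \<and> le x j \<and> le y j \<and>
     (\<forall>u\<in>P. le x u \<and> le y u \<longrightarrow> le j u)"

definition is_meet :: "'a set \<Rightarrow> ('a \<Rightarrow> 'a \<Rightarrow> bool) \<Rightarrow> 'a \<Rightarrow> 'a \<Rightarrow> 'a \<Rightarrow> bool" where
  "is_meet P le x y m \<longleftrightarrow> m \<in> P \<and> le m x \<and> le m y \<and>
     (\<forall>u\<in>P. le u x \<and> le u y \<longrightarrow> le u m)"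

definition LB :: "'a set \<Rightarrow> ('a \<Rightarrow> 'a \<Rightarrow> bool) \<Rightarrow> 'a set \<Rightarrow> 'a set" where
  "LB P le M = {w \<in> P. \<forall>m\<in>M. le w m}"

definition Lxy :: "'a set \<Rightarrow> ('a \<Rightarrow> 'a \<Rightarrow> bool) \<Rightarrow> 'a \<Rightarrow> 'a \<Rightarrow> 'a set" where
  "Lxy P le x y = {w \<in> P. le w x \<and> le w y}"

definition MaxS :: "('a \<Rightarrow> 'a \<Rightarrow> bool) \<Rightarrow> 'a set \<Rightarrow> 'a set" where
  "MaxS le A = {w \<in> A. \<forall>v\<in>A. le w v \<longrightarrow> v = w}"

definition orthogonal :: "'a set \<Rightarrow> ('a \<Rightarrow> 'a \<Rightarrow> bool) \<Rightarrow> ('a \<Rightarrow> 'a) \<Rightarrow> bool" where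
  "orthogonal P le c \<longleftrightarrow>
     (\<forall>x\<in>P. \<forall>y\<in>P. le x (c y) \<longrightarrow> (\<exists>j. is_join P le x y j))"

definition lub_complete :: "'a set \<Rightarrow> ('a \<Rightarrow> 'a \<Rightarrow> bool) \<Rightarrow> bool" where
  "lub_complete P le \<longleftrightarrow>
     (\<forall>M. M \<subseteq> P \<and> finite M \<longrightarrow>
        (\<forall>x \<in> LB P le M. \<exists>w \<in> MaxS le (LB P le M). le x w))"

definition orthomodular :: "'a set \<Rightarrow> ('a \<Rightarrow> 'a \<Rightarrow> bool) \<Rightarrow> ('a \<Rightarrow> 'a) \<Rightarrow> bool" where
  "orthomodular P le c \<longleftrightarrow> orthogonal P le c \<and>
     (\<forall>x\<in>P. \<forall>y\<in>P. le x y \<longrightarrow>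
        (\<exists>m. is_meet P le y (c x) m \<and> is_join P le x m y))"

definition join_set :: "'a set \<Rightarrow> ('a \<Rightarrow> 'a \<Rightarrow> bool) \<Rightarrow> 'a \<Rightarrow> 'a set \<Rightarrow> 'a set" where
  "join_set P le x M = {j. \<exists>m\<in>M. is_join P le x m j}"

definition sasaki :: "'a set \<Rightarrow> ('a \<Rightarrow> 'a \<Rightarrow> bool) \<Rightarrow> ('a \<Rightarrow> 'a) \<Rightarrow> 'a \<Rightarrow> 'a \<Rightarrow> 'a set" where
  "sasaki P le c x y = join_set P le (c x) (MaxS le (Lxy P le x y))"

definition dishkant :: "'a set \<Rightarrow> ('a \<Rightarrow> 'a \<Rightarrow> bool) \<Rightarrow> ('a \<Rightarrow> 'a) \<Rightarrow> 'a \<Rightarrow> 'a \<Rightarrow> 'a set" where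
  "dishkant P le c x y = sasaki P le c (c y) (c x)"

end

theory Submission
  imports Defs
begin

text \<open>
  For
  (i) \<Rightarrow> (ii), if \<open>x' \<or> m = 1\<close> for a maximal lower bound \<open>m\<close> of \<open>x, y\<close>,
  write \<open>x = m \<or> z\<close> with \<open>z = x \<and> m'\<close>; then \<open>z'\<close> lies above both \<open>x'\<close> and
  \<open>m\<close>, so \<open>z' = 1\<close>, \<open>z = 0\<close> and \<open>x = m \<le> y\<close>. For (ii) \<Rightarrow> (i), given
  \<open>x \<le> y\<close> put \<open>m = y \<and> x'\<close> and \<open>w = x \<or> m \<le> y\<close>: every upper bound of \<open>y'\<close>
  and \<open>w\<close> lies above \<open>m\<close> and \<open>m'\<close>, hence is \<open>1\<close> because
  \<open>m' \<or> m = m \<rightarrow>\<^sub>S 1 = 1\<close>; so \<open>y \<rightarrow>\<^sub>S w = 1\<close> and (ii) gives \<open>y \<le> w\<close>.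
  Condition (iii) is (ii) transported along the involution.
\<close>

locale poset_inv =
  fixes P le c zero one
  assumes bounded_poset_inv: "bounded_poset_inv P le c zero one"
begin

lemma ord_refl: "x \<in> P \<Longrightarrow> le x x"
  using bounded_poset_inv unfolding bounded_poset_inv_def by blast

lemma ord_antisym: "x \<in> P \<Longrightarrow> y \<in> P \<Longrightarrow> le x y \<Longrightarrow> le y x \<Longrightarrow> x = y"
  using bounded_poset_inv unfolding bounded_poset_inv_def by blast

lemma ord_trans: "x \<in> P \<Longrightarrow> y \<in> P \<Longrightarrow> z \<in> P \<Longrightarrow> le x y \<Longrightarrow> le y z \<Longrightarrow> le x z"
  using bounded_poset_inv unfolding bounded_poset_inv_def by blast

lemma zero_in: "zero \<in> P"
  using bounded_poset_inv unfolding bounded_poset_inv_def by blast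

lemma one_in: "one \<in> P"
  using bounded_poset_inv unfolding bounded_poset_inv_def by blast

lemma zero_le: "x \<in> P \<Longrightarrow> le zero x"
  using bounded_poset_inv unfolding bounded_poset_inv_def by blast

lemma le_one: "x \<in> P \<Longrightarrow> le x one"
  using bounded_poset_inv unfolding bounded_poset_inv_def by blast

lemma c_in: "x \<in> P \<Longrightarrow> c x \<in> P"
  using bounded_poset_inv unfolding bounded_poset_inv_def by blast

lemma c_c: "x \<in> P \<Longrightarrow> c (c x) = x"
  using bounded_poset_inv unfolding bounded_poset_inv_def by blast

lemma c_antitone: "x \<in> P \<Longrightarrow> y \<in> P \<Longrightarrow> le x y \<Longrightarrow> le (c y) (c x)"
  using bounded_poset_inv unfolding bounded_poset_inv_def by blast

lemma c_le_c_iff: "x \<in> P \<Longrightarrow> y \<in> P \<Longrightarrow> le (c x) (c y) \<longleftrightarrow> le y x"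
  using c_antitone[of "c x" "c y"] c_antitone[of y x] c_in c_c by auto

lemma le_c_commute: "x \<in> P \<Longrightarrow> y \<in> P \<Longrightarrow> le x (c y) \<longleftrightarrow> le y (c x)"
  using c_le_c_iff[of "c x" y] c_c c_in by auto

lemma one_le_iff: "x \<in> P \<Longrightarrow> le one x \<longleftrightarrow> x = one"
  using ord_antisym le_one one_in ord_refl by blast

lemma c_eq_one_iff: "x \<in> P \<Longrightarrow> c x = one \<longleftrightarrow> x = zero"
proof -
  have "le one (c zero)"
    using c_antitone[OF zero_in c_in[OF one_in] zero_le[OF c_in[OF one_in]]] c_c[OF one_in] by simp
  then have "c zero = one"
    using one_le_iff c_in zero_in by blast
  then show "x \<in> P \<Longrightarrow> c x = one \<longleftrightarrow> x = zero"
    using c_c zero_in by metis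
qed

lemma is_join_unique: "is_join P le x y j \<Longrightarrow> is_join P le x y j' \<Longrightarrow> j = j'"
  unfolding is_join_def by (meson ord_antisym)

lemma is_join_zero: "x \<in> P \<Longrightarrow> is_join P le x zero j \<Longrightarrow> j = x"
  unfolding is_join_def by (meson ord_antisym ord_refl zero_le)

lemma is_meet_c_is_join:
  "x \<in> P \<Longrightarrow> y \<in> P \<Longrightarrow> is_join P le (c x) (c y) j \<Longrightarrow> is_meet P le x y (c j)"
  unfolding is_join_def is_meet_def by (metis c_in c_c c_le_c_iff le_c_commute)

lemma c_le_of_is_meet_c:
  assumes m: "is_meet P le y (c x) m" and "x \<in> P" "y \<in> P" "j \<in> P" "le (c y) j" "le x j"
  shows "le (c m) j"
proof -
  have "m \<in> P"
    using m unfolding is_meet_def by blast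
  have "le (c j) y" "le (c j) (c x)"
    using assms c_antitone[of "c y" j] c_antitone[of x j] c_c c_in by auto
  then have "le (c j) m"
    using m c_in[OF \<open>j \<in> P\<close>] unfolding is_meet_def by blast
  then show ?thesis
    using c_le_c_iff[OF \<open>m \<in> P\<close> c_in[OF \<open>j \<in> P\<close>]] c_c[OF \<open>j \<in> P\<close>] by simp
qed

lemma join_exists_of_le_c:
  "orthogonal P le c \<Longrightarrow> x \<in> P \<Longrightarrow> y \<in> P \<Longrightarrow> le x (c y) \<Longrightarrow> \<exists>j. is_join P le x y j"
  unfolding orthogonal_def by blast

lemma MaxS_Lxy_of_le: "x \<in> P \<Longrightarrow> y \<in> P \<Longrightarrow> le x y \<Longrightarrow> MaxS le (Lxy P le x y) = {x}"
  unfolding MaxS_def Lxy_def by (auto intro: ord_refl dest: ord_antisym)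

lemma Lxy_commute: "Lxy P le x y = Lxy P le y x"
  unfolding Lxy_def by auto

lemma MaxS_Lxy_nonempty:
  assumes "lub_complete P le" "x \<in> P" "y \<in> P"
  shows "MaxS le (Lxy P le x y) \<noteq> {}"
proof -
  have "LB P le {x, y} = Lxy P le x y"
    unfolding LB_def Lxy_def by auto
  moreover have "zero \<in> LB P le {x, y}"
    using assms zero_in zero_le unfolding LB_def by auto
  ultimately show ?thesis
    using assms unfolding lub_complete_def by (metis empty_iff empty_subsetI finite.emptyI
        finite.insertI insert_subset)
qed

lemma sasaki_of_le:
  "x \<in> P \<Longrightarrow> y \<in> P \<Longrightarrow> le x y \<Longrightarrow> sasaki P le c x y = {j. is_join P le (c x) x j}"
  using MaxS_Lxy_of_le unfolding sasaki_def join_set_def by auto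

lemma sasaki_of_ge:
  "x \<in> P \<Longrightarrow> y \<in> P \<Longrightarrow> le y x \<Longrightarrow> sasaki P le c x y = {j. is_join P le (c x) y j}"
  using MaxS_Lxy_of_le[of y x] Lxy_commute unfolding sasaki_def join_set_def by auto

lemma orthomodular_is_join_c_one:
  assumes "orthomodular P le c" "x \<in> P"
  shows "is_join P le (c x) x one"
proof -
  obtain m where m: "is_meet P le one (c x) m" "is_join P le x m one"
    using assms one_in le_one unfolding orthomodular_def by blast
  have "m = c x"
    using m(1) ord_antisym c_in[OF assms(2)] le_one ord_refl unfolding is_meet_def by meson
  then show ?thesis
    using m(2) unfolding is_join_def by auto
qed

lemma orthomodular_eq_of_join_c_one:
  assumes om: "orthomodular P le c" and "x \<in> P" "m \<in> P" "le m x"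
    and j: "is_join P le (c x) m one"
  shows "m = x"
proof -
  obtain z where z: "is_meet P le x (c m) z" "is_join P le m z x"
    using om assms unfolding orthomodular_def by blast
  then have "z \<in> P" "le z x" "le z (c m)"
    unfolding is_meet_def by auto
  then have "le (c x) (c z)" "le m (c z)"
    using assms c_antitone le_c_commute by auto
  then have "le one (c z)"
    using j c_in[OF \<open>z \<in> P\<close>] unfolding is_join_def by blast
  then have "z = zero"
    using one_le_iff c_eq_one_iff c_in \<open>z \<in> P\<close> by blast
  then show ?thesis
    using z(2) is_join_zero[OF \<open>m \<in> P\<close>] by blast
qed

lemma orthomodular_le_iff_sasaki_one:
  assumes om: "orthomodular P le c" and lc: "lub_complete P le" and x: "x \<in> P" and y: "y \<in> P"
  shows "le x y \<longleftrightarrow> sasaki P le c x y = {one}"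
proof
  assume "le x y"
  then show "sasaki P le c x y = {one}"
    using sasaki_of_le[OF x y] orthomodular_is_join_c_one[OF om x] is_join_unique by auto
next
  assume sasaki_one: "sasaki P le c x y = {one}"
  obtain m where m: "m \<in> MaxS le (Lxy P le x y)"
    using MaxS_Lxy_nonempty[OF lc x y] by blast
  then have "m \<in> P" "le m x" "le m y"
    unfolding MaxS_def Lxy_def by auto
  then obtain j where j: "is_join P le (c x) m j"
    using join_exists_of_le_c[of "c x" m] om x c_antitone c_in unfolding orthomodular_def by blast
  with m have "j \<in> sasaki P le c x y"
    unfolding sasaki_def join_set_def by auto
  with j sasaki_one have "is_join P le (c x) m one"
    by auto
  then show "le x y"
    using orthomodular_eq_of_join_c_one[OF om x \<open>m \<in> P\<close> \<open>le m x\<close>] \<open>le m y\<close> by simp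
qed

lemma is_join_c_one_of_le_iff_sasaki_one:
  assumes og: "orthogonal P le c"
    and sasaki_one: "\<forall>x\<in>P. \<forall>y\<in>P. le x y \<longleftrightarrow> sasaki P le c x y = {one}"
    and "x \<in> P"
  shows "is_join P le (c x) x one"
proof -
  obtain j where "is_join P le (c x) x j"
    using join_exists_of_le_c[OF og] c_in ord_refl \<open>x \<in> P\<close> by blast
  moreover have "sasaki P le c x one = {one}"
    using sasaki_one \<open>x \<in> P\<close> one_in le_one by blast
  ultimately show ?thesis
    using sasaki_of_le[OF \<open>x \<in> P\<close> one_in le_one[OF \<open>x \<in> P\<close>]] by auto
qed

lemma orthomodular_of_le_iff_sasaki_one:
  assumes og: "orthogonal P le c"
    and sasaki_one: "\<forall>x\<in>P. \<forall>y\<in>P. le x y \<longleftrightarrow> sasaki P le c x y = {one}"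
  shows "orthomodular P le c"
  unfolding orthomodular_def
proof (intro conjI og ballI impI)
  fix x y assume x: "x \<in> P" and y: "y \<in> P" and "le x y"
  obtain k where "is_join P le (c y) (c (c x)) k"
    using join_exists_of_le_c[OF og] c_antitone c_c c_in x y \<open>le x y\<close> by metis
  then obtain m where m: "is_meet P le y (c x) m"
    using is_meet_c_is_join c_in x y by blast
  then have "m \<in> P" "le m y" "le m (c x)"
    unfolding is_meet_def by auto
  then obtain w where w: "is_join P le x m w"
    using join_exists_of_le_c[OF og] le_c_commute x by blast
  then have "w \<in> P" "le w y" "le x w" "le m w"
    using \<open>le m y\<close> \<open>le x y\<close> y unfolding is_join_def by auto
  obtain j where j: "is_join P le (c y) w j"
    using join_exists_of_le_c[OF og] c_antitone c_in c_c \<open>w \<in> P\<close> \<open>le w y\<close> y by metis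
  then have "j \<in> P" "le (c y) j" "le w j"
    unfolding is_join_def by auto
  then have "le (c m) j" "le m j"
    using c_le_of_is_meet_c[OF m x y] ord_trans \<open>le x w\<close> \<open>le m w\<close> \<open>w \<in> P\<close> \<open>m \<in> P\<close> x
    by blast+
  then have "j = one"
    using is_join_c_one_of_le_iff_sasaki_one[OF og sasaki_one \<open>m \<in> P\<close>] one_le_iff \<open>j \<in> P\<close>
    unfolding is_join_def by blast
  then have "le y w"
    using sasaki_one sasaki_of_ge[OF y \<open>w \<in> P\<close> \<open>le w y\<close>] j is_join_unique y \<open>w \<in> P\<close> by auto
  then have "w = y"
    using ord_antisym \<open>le w y\<close> \<open>w \<in> P\<close> y by blast
  then show "\<exists>m. is_meet P le y (c x) m \<and> is_join P le x m y"
    using m w by blast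
qed

lemma le_iff_sasaki_one_iff_le_iff_dishkant_one:
  "(\<forall>x\<in>P. \<forall>y\<in>P. le x y \<longleftrightarrow> sasaki P le c x y = {one}) \<longleftrightarrow>
   (\<forall>x\<in>P. \<forall>y\<in>P. le x y \<longleftrightarrow> dishkant P le c x y = {one})"
proof -
  have "le x y \<longleftrightarrow> le (c y) (c x)" if "x \<in> P" "y \<in> P" for x y
    using c_le_c_iff that by blast
  then show ?thesis
    unfolding dishkant_def by (metis c_c c_in)
qed

end

theorem theorem9:
  assumes "bounded_poset_inv P le c zero one"
    and "orthogonal P le c"
    and "lub_complete P le"
  shows "(orthomodular P le c
            \<longleftrightarrow> (\<forall>x\<in>P. \<forall>y\<in>P. le x y \<longleftrightarrow> sasaki P le c x y = {one}))
       \<and> (orthomodular P le c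
            \<longleftrightarrow> (\<forall>x\<in>P. \<forall>y\<in>P. le x y \<longleftrightarrow> dishkant P le c x y = {one}))"
proof -
  interpret poset_inv P le c zero one
    using assms(1) by unfold_locales
  have "orthomodular P le c \<longleftrightarrow> (\<forall>x\<in>P. \<forall>y\<in>P. le x y \<longleftrightarrow> sasaki P le c x y = {one})"
    using orthomodular_le_iff_sasaki_one[OF _ assms(3)]
      orthomodular_of_le_iff_sasaki_one[OF assms(2)] by blast
  then show ?thesis
    using le_iff_sasaki_one_iff_le_iff_dishkant_one by blast
qed

end
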